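(* For all CCSK transitions $t,u$: $t,u$ are key independent if and only if $t\odot u$.
   Context: Names $\mathsf N$ with bijection $\overline\cdot$ onto disjoint co-names; $\mathsf L=\mathsf N\cup\overline{\mathsf N}\cup\{\tau\}$ ($\alpha,\beta$ over $\mathsf L$, $\lambda$ over $\mathsf L\setminus\{\tau\}$); keys $\mathsf K$ denumerable. CCSK processes $X::=\mathbf 0\mid\alpha.X\mid X\backslash\lambda\mid X+Y\mid X|Y\mid\alpha[k].X$; $\mathrm{keys}(X)$ keys in $X$. Directions $D\in\{\mathrm L,\mathrm R\}$, $\bar{\mathrm L}=\mathrm R$, $\bar{\mathrm R}=\mathrm L$. Proof keyed labels $\theta::=\upsilon\alpha[k]\mid\upsilon\langle\upsilon_1\lambda[k],\upsilon_2\overline\lambda[k]\rangle$ ($\upsilon,\upsilon_i\in\{|_{\mathrm L},|_{\mathrm R},+_{\mathrm L},+_{\mathrm R}\}^*$), $\ell(\upsilon\alpha[k])=\alpha$, $\ell(\upsilon\langle\cdots\rangle)=\tau$, $\mathrm{key}(\theta)=k$. Forward CCSK$^{\mathrm P}$ transitions: least relation closed under (act) $\alpha.X\xrightarrow{\alpha[k]}\alpha[k].X$ if $\mathrm{keys}(X)=\emptyset$; (pre) $X\xrightarrow\theta X',\mathrm{key}(\theta)\ne k\Rightarrow\alpha[k].X\xrightarrow\theta\alpha[k].X'$; (res) $X\xrightarrow\theta X',\ell(\theta)\notin\{\lambda,\overline\lambda\}\Rightarrow X\backslash\lambda\xrightarrow\theta X'\backslash\lambda$; (par) $X\xrightarrow\theta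 X',\mathrm{key}(\theta)\notin\mathrm{keys}(Y)\Rightarrow X|Y\xrightarrow{|_{\mathrm L}\theta}X'|Y$, $Y|X\xrightarrow{|_{\mathrm R}\theta}Y|X'$; (syn) $X\xrightarrow{\upsilon_1\lambda[k]}X',Y\xrightarrow{\upsilon_2\overline\lambda[k]}Y'\Rightarrow X|Y\xrightarrow{\langle\upsilon_1\lambda[k],\upsilon_2\overline\lambda[k]\rangle}X'|Y'$; (sum) $X\xrightarrow\theta X',\mathrm{keys}(Y)=\emptyset\Rightarrow X+Y\xrightarrow{+_{\mathrm L}\theta}X'+Y$, $Y+X\xrightarrow{+_{\mathrm R}\theta}Y+X'$. Backward transitions are converses; $\bar t$ is the inverse of $t$. Paths are sequences of composable transitions; $\mathrm{keys}(r)$ is the set of keys of transitions of $r$; only processes reachable by a path from a key-free process are considered. Transitions are connected if there is a path from the source of one to the target of the other. CCSK: same processes, each CCSK$^{\mathrm P}$ transition with label $\theta$ gives a CCSK transition with label $\ell(\theta)[\mathrm{key}(\theta)]$ (bijection; $\hat t$ the CCSK$^{\mathrm P}$ transition of $t$). Independence $\iota$ on proof labels: least relation closed under (C1) $+_D\theta\mathrel\iota+_D\theta'$ if $\theta\mathrel\iota\theta'$; (P1) $|_D\theta\mathrel\iota|_D\theta'$ if $\theta\mathrel\iota\theta'$; (P2$_k$) $|_D\theta\mathrel\iota|_{\bar D}\theta'$ if keys differ; (S1) $|_D\theta\mathrel\iota\langle\theta_{\mathrm L},\theta_{\mathrm R}\rangle$ if $\theta\mathrel\iota\theta_D$; (S2)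 $\langle\theta_{\mathrm L},\theta_{\mathrm R}\rangle\mathrel\iota|_D\theta$ if $\theta_D\mathrel\iota\theta$; (S3) $\langle\theta_1,\theta_2\rangle\mathrel\iota\langle\theta_1',\theta_2'\rangle$ if $\theta_1\mathrel\iota\theta_1'$, $\theta_2\mathrel\iota\theta_2'$. For CCSK transitions $t\mathrel\iota u$ iff connected and labels of $\hat t,\hat u$ satisfy $\iota$. Event equivalence $\sim$ on CCSK transitions: smallest equivalence with $t\sim t'$ whenever $t:P\to Q$, $u:P\to R$, $u':Q\to S$, $t':R\to S$ ($u'$ with label and direction of $u$, $t'$ of $t$) and $t\mathrel\iota u$; events are classes $[t]$. Core independence: $t\odot u$ iff there are coinitial $t'\in[t]$, $u'\in[u]$ with $t'\mathrel\iota u'$. Event key equivalence $\sim_{\mathsf k}$: forward $t_1:X_1\to X_1'$, $t_2:X_2\to X_2'$ with the same key $k$ satisfy $t_1\sim_{\mathsf k}t_2$ iff there is a path from $X_1'$ to $X_2'$ not using key $k$; in general $t_1\sim_{\mathsf k}t_2$ iff $\mathrm{fwd}(t_1)\sim_{\mathsf k}\mathrm{fwd}(t_2)$ with $\mathrm{fwd}(t)=t$ if forward, $\bar t$ otherwise. Transitions $t:P\to Q$ with label $\alpha[m]$ and $u:P\to R$ with label $\beta[n]$ are directly key independent if $m\ne n$ and there are $u':Q\to S$ with label $\beta[n]$ (direction of $u$) and $t':R\to S$ with label $\alpha[m]$ (direction of $t$). Connected CCSK transitions $t,u$ are key independent if there are $t',u'$ with $t\sim_{\mathsf k}t'$, $u\sim_{\mathsf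 k}u'$ and $t',u'$ directly key independent. *)

theory Defs
  imports Main
begin

datatype 'n vlab = Nm 'n | CoNm 'n

datatype 'n act = Vis "'n vlab" | Tau

fun bar :: "'n vlab \<Rightarrow> 'n vlab" where
  "bar (Nm a) = CoNm a"
| "bar (CoNm a) = Nm a"

type_synonym key = nat

datatype 'n proc =
    PNil
  | Pre "'n act" "'n proc"
  | Res "'n proc" "'n vlab"
  | Sum "'n proc" "'n proc"
  | Par "'n proc" "'n proc"
  | KPre "'n act" key "'n proc"

fun keys :: "'n proc \<Rightarrow> key set" where
  "keys PNil = {}"
| "keys (Pre a X) = keys X"
| "keys (Res X l) = keys X"
| "keys (Sum X Y) = keys X \<union> keys Y"
| "keys (Par X Y) = keys X \<union> keys Y"
| "keys (KPre a k X) = insert k (keys X)"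

datatype side = SL | SR

fun oside :: "side \<Rightarrow> side" where
  "oside SL = SR" | "oside SR = SL"

datatype dop = DPar side | DSum side

text \<open>A proof keyed label: upsilon alpha[k] is a sequence of prefixes applied to a base
  label; upsilon <theta1,theta2> is a sequence of prefixes applied to a synchronisation pair.\<close>
datatype 'n plab = PBase "'n act" key | PPfx dop "'n plab" | PSyn "'n plab" "'n plab"

fun ell :: "'n plab \<Rightarrow> 'n act" where
  "ell (PBase a k) = a"
| "ell (PPfx d th) = ell th"
| "ell (PSyn th1 th2) = Tau"

fun pkey :: "'n plab \<Rightarrow> key" where
  "pkey (PBase a k) = k"
| "pkey (PPfx d th) = pkey th"
| "pkey (PSyn th1 th2) = pkey th1"

inductive fstep :: "'n proc \<Rightarrow> 'n plab \<Rightarrow> 'n proc \<Rightarrow> bool" where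
  act: "keys X = {} \<Longrightarrow> fstep (Pre a X) (PBase a k) (KPre a k X)"
| pre: "fstep X th X' \<Longrightarrow> pkey th \<noteq> k \<Longrightarrow> fstep (KPre a k X) th (KPre a k X')"
| res: "fstep X th X' \<Longrightarrow> ell th \<noteq> Vis l \<Longrightarrow> ell th \<noteq> Vis (bar l)
        \<Longrightarrow> fstep (Res X l) th (Res X' l)"
| parL: "fstep X th X' \<Longrightarrow> pkey th \<notin> keys Y \<Longrightarrow> fstep (Par X Y) (PPfx (DPar SL) th) (Par X' Y)"
| parR: "fstep X th X' \<Longrightarrow> pkey th \<notin> keys Y \<Longrightarrow> fstep (Par Y X) (PPfx (DPar SR) th) (Par Y X')"
| syn: "fstep X th1 X' \<Longrightarrow> fstep Y th2 Y' \<Longrightarrow> ell th1 = Vis l \<Longrightarrow> ell th2 = Vis (bar l)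
        \<Longrightarrow> pkey th1 = pkey th2 \<Longrightarrow> fstep (Par X Y) (PSyn th1 th2) (Par X' Y')"
| sumL: "fstep X th X' \<Longrightarrow> keys Y = {} \<Longrightarrow> fstep (Sum X Y) (PPfx (DSum SL) th) (Sum X' Y)"
| sumR: "fstep X th X' \<Longrightarrow> keys Y = {} \<Longrightarrow> fstep (Sum Y X) (PPfx (DSum SR) th) (Sum Y X')"

fun comp :: "side \<Rightarrow> 'n plab \<Rightarrow> 'n plab \<Rightarrow> 'n plab" where
  "comp SL a b = a" | "comp SR a b = b"

inductive pindep :: "'n plab \<Rightarrow> 'n plab \<Rightarrow> bool" where
  C1: "pindep th th' \<Longrightarrow> pindep (PPfx (DSum D) th) (PPfx (DSum D) th')"
| P1: "pindep th th' \<Longrightarrow> pindep (PPfx (DPar D) th) (PPfx (DPar D) th')"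
| P2: "pkey th \<noteq> pkey th' \<Longrightarrow> pindep (PPfx (DPar D) th) (PPfx (DPar (oside D)) th')"
| S1: "pindep th (comp D thL thR) \<Longrightarrow> pindep (PPfx (DPar D) th) (PSyn thL thR)"
| S2: "pindep (comp D thL thR) th \<Longrightarrow> pindep (PSyn thL thR) (PPfx (DPar D) th)"
| S3: "pindep th1 th1' \<Longrightarrow> pindep th2 th2' \<Longrightarrow> pindep (PSyn th1 th2) (PSyn th1' th2')"

datatype tdir = Fw | Bw

datatype 'n trans = Tr (src: "'n proc") (tdir: tdir) (lbl: "'n act") (tkey: key) (tgt: "'n proc")

definition any_step :: "'n proc \<Rightarrow> 'n proc \<Rightarrow> bool" where
  "any_step P Q \<longleftrightarrow> (\<exists>th. fstep P th Q \<or> fstep Q th P)"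

definition reachable :: "'n proc \<Rightarrow> bool" where
  "reachable X \<longleftrightarrow> (\<exists>X0. keys X0 = {} \<and> (X0, X) \<in> {(P, Q). any_step P Q}\<^sup>*)"

text \<open>theta is the proof keyed label of the CCSK^P transition corresponding to t (t hat).\<close>
definition hat_lab :: "'n trans \<Rightarrow> 'n plab \<Rightarrow> bool" where
  "hat_lab t th \<longleftrightarrow>
     (if tdir t = Fw then fstep (src t) th (tgt t) else fstep (tgt t) th (src t))
     \<and> ell th = lbl t \<and> pkey th = tkey t"

definition is_trans :: "'n trans \<Rightarrow> bool" where
  "is_trans t \<longleftrightarrow> reachable (src t) \<and> (\<exists>th. hat_lab t th)"

definition path_rel :: "('n proc \<times> 'n proc) set" where
  "path_rel = {(P, Q). \<exists>t. is_trans t \<and> src t = P \<and> tgt t = Q}"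

definition connected :: "'n trans \<Rightarrow> 'n trans \<Rightarrow> bool" where
  "connected t u \<longleftrightarrow> (src t, tgt u) \<in> path_rel\<^sup>*"

definition tindep :: "'n trans \<Rightarrow> 'n trans \<Rightarrow> bool" where
  "tindep t u \<longleftrightarrow> is_trans t \<and> is_trans u \<and> connected t u \<and>
     (\<exists>th th'. hat_lab t th \<and> hat_lab u th' \<and> pindep th th')"

definition square :: "'n trans \<Rightarrow> 'n trans \<Rightarrow> bool" where
  "square t t' \<longleftrightarrow> (\<exists>u u'. is_trans t \<and> is_trans u \<and> is_trans u' \<and> is_trans t' \<and>
     src u = src t \<and> src u' = tgt t \<and> src t' = tgt u \<and> tgt u' = tgt t' \<and>
     lbl u' = lbl u \<and> tkey u' = tkey u \<and> tdir u' = tdir u \<and>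
     lbl t' = lbl t \<and> tkey t' = tkey t \<and> tdir t' = tdir t \<and>
     tindep t u)"

inductive ev_equiv :: "'n trans \<Rightarrow> 'n trans \<Rightarrow> bool" where
  base: "square t t' \<Longrightarrow> ev_equiv t t'"
| refl: "ev_equiv t t"
| sym: "ev_equiv t t' \<Longrightarrow> ev_equiv t' t"
| trans: "ev_equiv t t' \<Longrightarrow> ev_equiv t' t'' \<Longrightarrow> ev_equiv t t''"

definition core_indep :: "'n trans \<Rightarrow> 'n trans \<Rightarrow> bool" where
  "core_indep t u \<longleftrightarrow> (\<exists>t' u'. src t' = src u' \<and> ev_equiv t t' \<and> ev_equiv u u' \<and> tindep t' u')"

definition fwd :: "'n trans \<Rightarrow> 'n trans" where
  "fwd t = (if tdir t = Fw then t else Tr (tgt t) Fw (lbl t) (tkey t) (src t))"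

definition path_rel_avoid :: "key \<Rightarrow> ('n proc \<times> 'n proc) set" where
  "path_rel_avoid k = {(P, Q). \<exists>t. is_trans t \<and> src t = P \<and> tgt t = Q \<and> tkey t \<noteq> k}"

definition key_equiv :: "'n trans \<Rightarrow> 'n trans \<Rightarrow> bool" where
  "key_equiv t1 t2 \<longleftrightarrow> tkey (fwd t1) = tkey (fwd t2) \<and>
     (tgt (fwd t1), tgt (fwd t2)) \<in> (path_rel_avoid (tkey (fwd t1)))\<^sup>*"

definition direct_key_indep :: "'n trans \<Rightarrow> 'n trans \<Rightarrow> bool" where
  "direct_key_indep t u \<longleftrightarrow> is_trans t \<and> is_trans u \<and> src t = src u \<and> tkey t \<noteq> tkey u \<and>
     (\<exists>u' t'. is_trans u' \<and> is_trans t' \<and> src u' = tgt t \<and> src t' = tgt u \<and> tgt u' = tgt t' \<and>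
        lbl u' = lbl u \<and> tkey u' = tkey u \<and> tdir u' = tdir u \<and>
        lbl t' = lbl t \<and> tkey t' = tkey t \<and> tdir t' = tdir t)"

definition key_indep :: "'n trans \<Rightarrow> 'n trans \<Rightarrow> bool" where
  "key_indep t u \<longleftrightarrow> connected t u \<and>
     (\<exists>t' u'. is_trans t' \<and> is_trans u' \<and> key_equiv t t' \<and> key_equiv u u' \<and> direct_key_indep t' u')"

end

theory Submission
  imports Defs "HOL-Library.Confluence"
begin

(*
  Event equivalence only relates transitions with the same key and direction whose sources are
  joined by a path, and the path given by a square avoids the key; hence it refines key
  equivalence. Conversely, two forward transitions with key k whose targets are joined by a path
  avoiding k are event equivalent: undoing steps with keys other than k is strongly confluent
  (two steps into the same process either coincide or come from a common source), so by
  Church-Rosser the path can be rearranged into undoing steps followed by redoing steps, and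
  along each of them the k-transition is transported by a square. Backward transitions reduce to
  forward ones by inversion.

  A square of transitions with distinct keys is, after orienting its sides, a diamond of forward
  steps, and the proof labels of such a diamond are independent; conversely, independent
  coinitial transitions close into a square. So direct key independence is independence of
  coinitial transitions. Inverting one side of a directly key independent pair re-roots its
  square, which lets both directions be matched with those of t and u before passing from key
  equivalence to event equivalence.
*)

section \<open>Forward steps\<close>

inductive_simps fstep_from_Pre: "fstep (Pre c X) b Z"
inductive_simps fstep_from_KPre: "fstep (KPre c k X) b Z"
inductive_simps fstep_from_Res: "fstep (Res X l) b Z"
inductive_simps fstep_from_Sum: "fstep (Sum X Y) b Z"
inductive_simps fstep_from_Par: "fstep (Par X Y) b Z"

inductive_simps fstep_to_KPre: "fstep Z b (KPre c k X)"
inductive_simps fstep_to_Res: "fstep Z b (Res X l)"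
inductive_simps fstep_to_Sum: "fstep Z b (Sum X Y)"
inductive_simps fstep_to_Par: "fstep Z b (Par X Y)"

lemma fstep_keys: "fstep X a Y \<Longrightarrow> keys Y = insert (pkey a) (keys X) \<and> pkey a \<notin> keys X"
  by (induction rule: fstep.induct) auto

lemma fstep_pkey_in_tgt: "fstep X a Y \<Longrightarrow> pkey a \<in> keys Y"
  using fstep_keys by blast

lemma fstep_keys_mono: "fstep X a Y \<Longrightarrow> keys X \<subseteq> keys Y"
  using fstep_keys by blast

lemma fstep_unique_undo:
  "fstep X a Y \<Longrightarrow> fstep Z b Y \<Longrightarrow> pkey a = pkey b \<Longrightarrow> X = Z \<and> a = b"
proof (induction arbitrary: Z b rule: fstep.induct)
  case act
  then show ?case by (auto simp: fstep_to_KPre dest: fstep_pkey_in_tgt)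
next
  case pre
  from pre.prems pre.hyps show ?case
    by (auto simp: fstep_to_KPre dest: fstep_pkey_in_tgt pre.IH)
next
  case res
  from res.prems res.hyps show ?case by (auto simp: fstep_to_Res dest: res.IH)
next
  case parL
  from parL.prems parL.hyps show ?case
    by (auto simp: fstep_to_Par dest: fstep_pkey_in_tgt parL.IH)
next
  case parR
  from parR.prems parR.hyps show ?case
    by (auto simp: fstep_to_Par dest: fstep_pkey_in_tgt parR.IH)
next
  case syn
  from syn.prems syn.hyps show ?case
    by (auto simp: fstep_to_Par dest: fstep_pkey_in_tgt syn.IH)
next
  case sumL
  from sumL.prems sumL.hyps show ?case
    by (auto simp: fstep_to_Sum dest: fstep_pkey_in_tgt sumL.IH)
next
  case sumR
  from sumR.prems sumR.hyps show ?case
    by (auto simp: fstep_to_Sum dest: fstep_pkey_in_tgt sumR.IH)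
qed

lemma fstep_backward_diamond_parL:
  assumes step: "fstep X th X'" "pkey th \<notin> keys Y"
    and IH: "\<And>Z b. fstep Z b X' \<Longrightarrow> pkey th \<noteq> pkey b \<Longrightarrow> \<exists>W. fstep W b X \<and> fstep W th Z"
    and other: "fstep Z b (Par X' Y)" "pkey th \<noteq> pkey b"
  shows "\<exists>W. fstep W b (Par X Y) \<and> fstep W (PPfx (DPar SL) th) Z"
proof -
  from other(1) consider
    (L) Z0 b0 where "Z = Par Z0 Y" "b = PPfx (DPar SL) b0" "fstep Z0 b0 X'" "pkey b0 \<notin> keys Y"
  | (R) Z0 b0 where "Z = Par X' Z0" "b = PPfx (DPar SR) b0" "fstep Z0 b0 Y" "pkey b0 \<notin> keys X'"
  | (S) Z1 Z2 b1 b2 l where "Z = Par Z1 Z2" "b = PSyn b1 b2" "fstep Z1 b1 X'" "fstep Z2 b2 Y"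
       "ell b1 = Vis l" "ell b2 = Vis (bar l)" "pkey b1 = pkey b2"
    by (auto simp: fstep_to_Par)
  then show ?thesis
  proof cases
    case L
    from IH[OF L(3)] L other obtain W where "fstep W b0 X" "fstep W th Z0" by auto
    with L step show ?thesis by (auto intro!: exI[of _ "Par W Y"] fstep.intros)
  next
    case R
    with step fstep_keys_mono[OF step(1)] fstep_keys_mono[OF R(3)] show ?thesis
      by (auto intro!: exI[of _ "Par X Z0"] fstep.intros)
  next
    case S
    from IH[OF S(3)] S other obtain W where "fstep W b1 X" "fstep W th Z1" by auto
    with S step fstep_keys_mono[OF S(4)] show ?thesis
      by (auto intro!: exI[of _ "Par W Z2"] fstep.intros)
  qed
qed

lemma fstep_backward_diamond_parR:
  assumes step: "fstep X th X'" "pkey th \<notin> keys Y"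
    and IH: "\<And>Z b. fstep Z b X' \<Longrightarrow> pkey th \<noteq> pkey b \<Longrightarrow> \<exists>W. fstep W b X \<and> fstep W th Z"
    and other: "fstep Z b (Par Y X')" "pkey th \<noteq> pkey b"
  shows "\<exists>W. fstep W b (Par Y X) \<and> fstep W (PPfx (DPar SR) th) Z"
proof -
  from other(1) consider
    (L) Z0 b0 where "Z = Par Z0 X'" "b = PPfx (DPar SL) b0" "fstep Z0 b0 Y" "pkey b0 \<notin> keys X'"
  | (R) Z0 b0 where "Z = Par Y Z0" "b = PPfx (DPar SR) b0" "fstep Z0 b0 X'" "pkey b0 \<notin> keys Y"
  | (S) Z1 Z2 b1 b2 l where "Z = Par Z1 Z2" "b = PSyn b1 b2" "fstep Z1 b1 Y" "fstep Z2 b2 X'"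
       "ell b1 = Vis l" "ell b2 = Vis (bar l)" "pkey b1 = pkey b2"
    by (auto simp: fstep_to_Par)
  then show ?thesis
  proof cases
    case L
    with step fstep_keys_mono[OF step(1)] fstep_keys_mono[OF L(3)] show ?thesis
      by (auto intro!: exI[of _ "Par Z0 X"] fstep.intros)
  next
    case R
    from IH[OF R(3)] R other obtain W where "fstep W b0 X" "fstep W th Z0" by auto
    with R step show ?thesis by (auto intro!: exI[of _ "Par Y W"] fstep.intros)
  next
    case S
    from IH[OF S(4)] S other obtain W where "fstep W b2 X" "fstep W th Z2" by auto
    with S step fstep_keys_mono[OF S(3)] show ?thesis
      by (auto intro!: exI[of _ "Par Z1 W"] fstep.intros)
  qed
qed

lemma fstep_backward_diamond_syn:
  assumes step: "fstep X th1 X'" "fstep Y th2 Y'" "ell th1 = Vis l" "ell th2 = Vis (bar l)"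
      "pkey th1 = pkey th2"
    and IH1: "\<And>Z b. fstep Z b X' \<Longrightarrow> pkey th1 \<noteq> pkey b \<Longrightarrow> \<exists>W. fstep W b X \<and> fstep W th1 Z"
    and IH2: "\<And>Z b. fstep Z b Y' \<Longrightarrow> pkey th2 \<noteq> pkey b \<Longrightarrow> \<exists>W. fstep W b Y \<and> fstep W th2 Z"
    and other: "fstep Z b (Par X' Y')" "pkey th1 \<noteq> pkey b"
  shows "\<exists>W. fstep W b (Par X Y) \<and> fstep W (PSyn th1 th2) Z"
proof -
  from other(1) consider
    (L) Z0 b0 where "Z = Par Z0 Y'" "b = PPfx (DPar SL) b0" "fstep Z0 b0 X'" "pkey b0 \<notin> keys Y'"
  | (R) Z0 b0 where "Z = Par X' Z0" "b = PPfx (DPar SR) b0" "fstep Z0 b0 Y'" "pkey b0 \<notin> keys X'"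
  | (S) Z1 Z2 b1 b2 l' where "Z = Par Z1 Z2" "b = PSyn b1 b2" "fstep Z1 b1 X'" "fstep Z2 b2 Y'"
       "ell b1 = Vis l'" "ell b2 = Vis (bar l')" "pkey b1 = pkey b2"
    by (auto simp: fstep_to_Par)
  then show ?thesis
  proof cases
    case L
    from IH1[OF L(3)] L other obtain W where "fstep W b0 X" "fstep W th1 Z0" by auto
    with L step fstep_keys_mono[OF step(2)] show ?thesis
      by (auto intro!: exI[of _ "Par W Y"] fstep.intros)
  next
    case R
    from IH2[OF R(3)] R other step obtain W where "fstep W b0 Y" "fstep W th2 Z0" by auto
    with R step fstep_keys_mono[OF step(1)] show ?thesis
      by (auto intro!: exI[of _ "Par X W"] fstep.intros)
  next
    case S
    from IH1[OF S(3)] S other obtain W1 where "fstep W1 b1 X" "fstep W1 th1 Z1" by auto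
    moreover from IH2[OF S(4)] S other step obtain W2 where "fstep W2 b2 Y" "fstep W2 th2 Z2"
      by auto
    ultimately show ?thesis using S step by (auto intro!: exI[of _ "Par W1 W2"] fstep.intros)
  qed
qed

lemma fstep_backward_diamond:
  "fstep X a Y \<Longrightarrow> fstep Z b Y \<Longrightarrow> pkey a \<noteq> pkey b \<Longrightarrow> \<exists>W. fstep W b X \<and> fstep W a Z"
proof (induction arbitrary: Z b rule: fstep.induct)
  case act
  then show ?case by (auto simp: fstep_to_KPre dest: fstep_pkey_in_tgt)
next
  case (pre X th X' k c)
  from pre.prems pre.hyps obtain Z0 where "Z = KPre c k Z0" "fstep Z0 b X'" "pkey b \<noteq> k"
    by (auto simp: fstep_to_KPre dest: fstep_pkey_in_tgt)
  with pre show ?case by (blast intro: fstep.pre)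
next
  case (res X th X' l)
  from res.prems obtain Z0 where
    "Z = Res Z0 l" "fstep Z0 b X'" "ell b \<noteq> Vis l" "ell b \<noteq> Vis (bar l)"
    by (auto simp: fstep_to_Res)
  with res show ?case by (blast intro: fstep.res)
next
  case parL
  from parL.prems show ?case by (intro fstep_backward_diamond_parL[OF parL.hyps parL.IH]) simp_all
next
  case parR
  from parR.prems show ?case by (intro fstep_backward_diamond_parR[OF parR.hyps parR.IH]) simp_all
next
  case syn
  from syn.prems show ?case by (intro fstep_backward_diamond_syn[OF syn.hyps syn.IH]) simp_all
next
  case (sumL X th X' Y)
  from sumL.prems sumL.hyps obtain Z0 b0 where
    "Z = Sum Z0 Y" "b = PPfx (DSum SL) b0" "fstep Z0 b0 X'"
    by (auto simp: fstep_to_Sum dest: fstep_pkey_in_tgt)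
  with sumL show ?case by (fastforce intro: fstep.sumL)
next
  case (sumR X th X' Y)
  from sumR.prems sumR.hyps obtain Z0 b0 where
    "Z = Sum Y Z0" "b = PPfx (DSum SR) b0" "fstep Z0 b0 X'"
    by (auto simp: fstep_to_Sum dest: fstep_pkey_in_tgt)
  with sumR show ?case by (fastforce intro: fstep.sumR)
qed


section \<open>Independence of proof keyed labels\<close>

fun wf_plab :: "'n plab \<Rightarrow> bool" where
  "wf_plab (PBase a k) = True"
| "wf_plab (PPfx d th) = wf_plab th"
| "wf_plab (PSyn a b) = (wf_plab a \<and> wf_plab b \<and> pkey a = pkey b)"

lemma fstep_wf_plab: "fstep X a Y \<Longrightarrow> wf_plab a"
  by (induction rule: fstep.induct) auto

lemma oside_oside [simp]: "oside (oside D) = D"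
  by (cases D) auto

lemma pindep_sym: "pindep a b \<Longrightarrow> pindep b a"
proof (induction rule: pindep.induct)
  case (P2 th th' D)
  then show ?case using pindep.P2[of th' th "oside D"] by auto
qed (auto intro: pindep.intros)

lemma pindep_pkey_neq: "pindep a b \<Longrightarrow> wf_plab a \<Longrightarrow> wf_plab b \<Longrightarrow> pkey a \<noteq> pkey b"
proof (induction rule: pindep.induct)
  case (S1 th D thL thR)
  then show ?case by (cases D) auto
next
  case (S2 D thL thR th)
  then show ?case by (cases D) auto
qed auto

lemma pindep_fstep_pkey_neq: "pindep a b \<Longrightarrow> fstep X a X' \<Longrightarrow> fstep Y b Y' \<Longrightarrow> pkey a \<noteq> pkey b"
  using pindep_pkey_neq fstep_wf_plab by blast

lemma diamond_pindep_parL: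
  assumes IH: "\<And>b P X. fstep W1 b P \<Longrightarrow> fstep P th X \<Longrightarrow> fstep Z1 b X \<Longrightarrow> pkey th \<noteq> pkey b
      \<Longrightarrow> pindep th b"
    and diamond: "fstep (Par W1 W2) b P" "fstep P (PPfx (DPar SL) th) X" "fstep (Par Z1 W2) b X"
      "pkey th \<noteq> pkey b"
  shows "pindep (PPfx (DPar SL) th) b"
proof -
  from diamond(1) consider
    (L) P0 b0 where "P = Par P0 W2" "b = PPfx (DPar SL) b0" "fstep W1 b0 P0"
  | (R) b0 where "b = PPfx (DPar SR) b0"
  | (S) P1 P2 b1 b2 where "P = Par P1 P2" "b = PSyn b1 b2" "fstep W1 b1 P1"
    by (auto simp: fstep_from_Par)
  then show ?thesis
  proof cases
    case L
    from diamond(2) L obtain X0 where X: "X = Par X0 W2" "fstep P0 th X0"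
      by (auto simp: fstep_from_Par)
    from diamond(3) X L have "fstep Z1 b0 X0" by (auto simp: fstep_from_Par)
    with IH[OF L(3) X(2)] diamond(4) L show ?thesis by (auto intro: pindep.P1)
  next
    case R
    with diamond(4) pindep.P2[of th b0 SL] show ?thesis by auto
  next
    case S
    from diamond(2) S obtain X1 where X: "X = Par X1 P2" "fstep P1 th X1"
      by (auto simp: fstep_from_Par)
    from diamond(3) X S have "fstep Z1 b1 X1" by (auto simp: fstep_from_Par)
    with IH[OF S(3) X(2)] diamond(4) S show ?thesis using pindep.S1[of th SL b1 b2] by auto
  qed
qed

lemma diamond_pindep_parR:
  assumes IH: "\<And>b P X. fstep W2 b P \<Longrightarrow> fstep P th X \<Longrightarrow> fstep Z2 b X \<Longrightarrow> pkey th \<noteq> pkey b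
      \<Longrightarrow> pindep th b"
    and diamond: "fstep (Par W1 W2) b P" "fstep P (PPfx (DPar SR) th) X" "fstep (Par W1 Z2) b X"
      "pkey th \<noteq> pkey b"
  shows "pindep (PPfx (DPar SR) th) b"
proof -
  from diamond(1) consider
    (R) P0 b0 where "P = Par W1 P0" "b = PPfx (DPar SR) b0" "fstep W2 b0 P0"
  | (L) b0 where "b = PPfx (DPar SL) b0"
  | (S) P1 P2 b1 b2 where "P = Par P1 P2" "b = PSyn b1 b2" "fstep W2 b2 P2"
    by (auto simp: fstep_from_Par)
  then show ?thesis
  proof cases
    case R
    from diamond(2) R obtain X0 where X: "X = Par W1 X0" "fstep P0 th X0"
      by (auto simp: fstep_from_Par)
    from diamond(3) X R have "fstep Z2 b0 X0" by (auto simp: fstep_from_Par)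
    with IH[OF R(3) X(2)] diamond(4) R show ?thesis by (auto intro: pindep.P1)
  next
    case L
    with diamond(4) pindep.P2[of th b0 SR] show ?thesis by auto
  next
    case S
    from diamond(2) S obtain X2 where X: "X = Par P1 X2" "fstep P2 th X2"
      by (auto simp: fstep_from_Par)
    from diamond(3) X S have "fstep Z2 b2 X2" by (auto simp: fstep_from_Par)
    with IH[OF S(3) X(2)] diamond(1,4) S show ?thesis
      using pindep.S1[of th SR b1 b2] by (auto simp: fstep_from_Par)
  qed
qed

lemma diamond_pindep_syn:
  assumes IH1: "\<And>b P X. fstep W1 b P \<Longrightarrow> fstep P th1 X \<Longrightarrow> fstep Z1 b X \<Longrightarrow> pkey th1 \<noteq> pkey b
      \<Longrightarrow> pindep th1 b"
    and IH2: "\<And>b P X. fstep W2 b P \<Longrightarrow> fstep P th2 X \<Longrightarrow> fstep Z2 b X \<Longrightarrow> pkey th2 \<noteq> pkey b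
      \<Longrightarrow> pindep th2 b"
    and keys: "pkey th1 = pkey th2"
    and diamond: "fstep (Par W1 W2) b P" "fstep P (PSyn th1 th2) X" "fstep (Par Z1 Z2) b X"
      "pkey th1 \<noteq> pkey b"
  shows "pindep (PSyn th1 th2) b"
proof -
  from diamond(1) consider
    (L) P0 b0 where "P = Par P0 W2" "b = PPfx (DPar SL) b0" "fstep W1 b0 P0"
  | (R) P0 b0 where "P = Par W1 P0" "b = PPfx (DPar SR) b0" "fstep W2 b0 P0"
  | (S) P1 P2 b1 b2 where "P = Par P1 P2" "b = PSyn b1 b2" "fstep W1 b1 P1" "fstep W2 b2 P2"
      "pkey b1 = pkey b2"
    by (auto simp: fstep_from_Par)
  then show ?thesis
  proof cases
    case L
    from diamond(2) L obtain X1 X2 where X: "X = Par X1 X2" "fstep P0 th1 X1"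
      by (auto simp: fstep_from_Par)
    from diamond(3) X L have "fstep Z1 b0 X1" by (auto simp: fstep_from_Par)
    with IH1[OF L(3) X(2)] diamond(4) L show ?thesis using pindep.S2[of SL th1 th2 b0] by auto
  next
    case R
    from diamond(2) R obtain X1 X2 where X: "X = Par X1 X2" "fstep P0 th2 X2"
      by (auto simp: fstep_from_Par)
    from diamond(3) X R have "fstep Z2 b0 X2" by (auto simp: fstep_from_Par)
    with IH2[OF R(3) X(2)] diamond(4) keys R show ?thesis using pindep.S2[of SR th1 th2 b0] by auto
  next
    case S
    from diamond(2) S obtain X1 X2 where X: "X = Par X1 X2" "fstep P1 th1 X1" "fstep P2 th2 X2"
      by (auto simp: fstep_from_Par)
    from diamond(3) X S have "fstep Z1 b1 X1" "fstep Z2 b2 X2" by (auto simp: fstep_from_Par)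
    with IH1[OF S(3) X(2)] IH2[OF S(4) X(3)] diamond(4) keys S show ?thesis
      by (auto intro: pindep.S3)
  qed
qed

lemma diamond_pindep:
  "fstep W a Z \<Longrightarrow> fstep W b P \<Longrightarrow> fstep P a X \<Longrightarrow> fstep Z b X \<Longrightarrow> pkey a \<noteq> pkey b
    \<Longrightarrow> pindep a b"
proof (induction arbitrary: b P X rule: fstep.induct)
  case act
  then show ?case by (auto simp: fstep_from_Pre fstep_from_KPre)
next
  case (pre W0 th Z0 k c)
  from pre.prems obtain P0 X0 where "fstep W0 b P0" "fstep P0 th X0" "fstep Z0 b X0"
    by (auto simp: fstep_from_KPre)
  with pre.IH pre.prems show ?case by blast
next
  case (res W0 th Z0 l)
  from res.prems obtain P0 X0 where "fstep W0 b P0" "fstep P0 th X0" "fstep Z0 b X0"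
    by (auto simp: fstep_from_Res)
  with res.IH res.prems show ?case by blast
next
  case (sumL W0 th Z0 W2)
  from sumL.prems obtain P0 X0 b0 where "b = PPfx (DSum SL) b0"
      "fstep W0 b0 P0" "fstep P0 th X0" "fstep Z0 b0 X0"
    by (auto simp: fstep_from_Sum dest: fstep_pkey_in_tgt)
  with sumL.IH sumL.prems show ?case by (auto intro: pindep.C1)
next
  case (sumR W0 th Z0 W1)
  from sumR.prems obtain P0 X0 b0 where "b = PPfx (DSum SR) b0"
      "fstep W0 b0 P0" "fstep P0 th X0" "fstep Z0 b0 X0"
    by (auto simp: fstep_from_Sum dest: fstep_pkey_in_tgt)
  with sumR.IH sumR.prems show ?case by (auto intro: pindep.C1)
next
  case parL
  show ?case using diamond_pindep_parL[OF parL.IH parL.prems(1-3)] parL.prems(4) by simp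
next
  case parR
  show ?case using diamond_pindep_parR[OF parR.IH parR.prems(1-3)] parR.prems(4) by simp
next
  case syn
  show ?case using diamond_pindep_syn[OF syn.IH syn.hyps(5) syn.prems(1-3)] syn.prems(4) by simp
qed

lemma pindep_PBase: "\<not> pindep (PBase c k) b" "\<not> pindep b (PBase c k)"
  by (auto elim: pindep.cases)

lemma pindep_PSum_cases:
  assumes "pindep (PPfx (DSum D) a) b"
  obtains b0 where "b = PPfx (DSum D) b0" "pindep a b0"
  using assms by (auto elim: pindep.cases)

lemma pindep_PPar_cases:
  assumes "pindep (PPfx (DPar D) a) b"
  obtains (same) b0 where "b = PPfx (DPar D) b0" "pindep a b0"
  | (opposite) b0 where "b = PPfx (DPar (oside D)) b0" "pkey a \<noteq> pkey b0"
  | (syn) b1 b2 where "b = PSyn b1 b2" "pindep a (comp D b1 b2)"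
  using assms by (auto elim: pindep.cases)

lemma pindep_PSyn_cases:
  assumes "pindep (PSyn a1 a2) b"
  obtains (left) b0 where "b = PPfx (DPar SL) b0" "pindep a1 b0"
  | (right) b0 where "b = PPfx (DPar SR) b0" "pindep a2 b0"
  | (syn) b1 b2 where "b = PSyn b1 b2" "pindep a1 b1" "pindep a2 b2"
  using assms
proof (cases rule: pindep.cases)
  case (S2 D b0)
  then show ?thesis using left right by (cases D) auto
qed (use syn in auto)

lemma pindep_forward_diamond_parL:
  assumes step: "fstep X th X'" "pkey th \<notin> keys Y"
    and IH: "\<And>b R. fstep X b R \<Longrightarrow> pindep th b \<Longrightarrow> \<exists>S. fstep X' b S \<and> fstep R th S"
    and other: "fstep (Par X Y) b R" "pindep (PPfx (DPar SL) th) b"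
  shows "\<exists>S. fstep (Par X' Y) b S \<and> fstep R (PPfx (DPar SL) th) S"
  using other(2)
proof (cases rule: pindep_PPar_cases)
  case (same b0)
  with other(1) obtain R0 where R: "R = Par R0 Y" "fstep X b0 R0" "pkey b0 \<notin> keys Y"
    by (auto simp: fstep_from_Par)
  from IH[OF R(2)] same obtain S where "fstep X' b0 S" "fstep R0 th S" by blast
  with R same step show ?thesis by (auto intro!: exI[of _ "Par S Y"] fstep.intros)
next
  case (opposite b0)
  with other(1) obtain R0 where R: "R = Par X R0" "fstep Y b0 R0" "pkey b0 \<notin> keys X"
    by (auto simp: fstep_from_Par)
  with opposite step fstep_keys[OF step(1)] fstep_keys[OF R(2)] show ?thesis
    by (auto intro!: exI[of _ "Par X' R0"] fstep.intros)
next
  case (syn b1 b2)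
  with other(1) obtain R1 R2 l where R: "R = Par R1 R2" "fstep X b1 R1" "fstep Y b2 R2"
      "ell b1 = Vis l" "ell b2 = Vis (bar l)" "pkey b1 = pkey b2"
    by (auto simp: fstep_from_Par)
  from IH[OF R(2)] syn obtain S where S: "fstep X' b1 S" "fstep R1 th S" by auto
  have "pkey th \<noteq> pkey b1" using pindep_fstep_pkey_neq[OF _ step(1) R(2)] syn by auto
  with R syn S step fstep_keys[OF R(3)] show ?thesis
    by (auto intro!: exI[of _ "Par S R2"] fstep.intros)
qed

lemma pindep_forward_diamond_parR:
  assumes step: "fstep X th X'" "pkey th \<notin> keys Y"
    and IH: "\<And>b R. fstep X b R \<Longrightarrow> pindep th b \<Longrightarrow> \<exists>S. fstep X' b S \<and> fstep R th S"
    and other: "fstep (Par Y X) b R" "pindep (PPfx (DPar SR) th) b"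
  shows "\<exists>S. fstep (Par Y X') b S \<and> fstep R (PPfx (DPar SR) th) S"
  using other(2)
proof (cases rule: pindep_PPar_cases)
  case (same b0)
  with other(1) obtain R0 where R: "R = Par Y R0" "fstep X b0 R0" "pkey b0 \<notin> keys Y"
    by (auto simp: fstep_from_Par)
  from IH[OF R(2)] same obtain S where "fstep X' b0 S" "fstep R0 th S" by blast
  with R same step show ?thesis by (auto intro!: exI[of _ "Par Y S"] fstep.intros)
next
  case (opposite b0)
  with other(1) obtain R0 where R: "R = Par R0 X" "fstep Y b0 R0" "pkey b0 \<notin> keys X"
    by (auto simp: fstep_from_Par)
  with opposite step fstep_keys[OF step(1)] fstep_keys[OF R(2)] show ?thesis
    by (auto intro!: exI[of _ "Par R0 X'"] fstep.intros)
next
  case (syn b1 b2)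
  with other(1) obtain R1 R2 l where R: "R = Par R1 R2" "fstep Y b1 R1" "fstep X b2 R2"
      "ell b1 = Vis l" "ell b2 = Vis (bar l)" "pkey b1 = pkey b2"
    by (auto simp: fstep_from_Par)
  from IH[OF R(3)] syn obtain S where S: "fstep X' b2 S" "fstep R2 th S" by auto
  have "pkey th \<noteq> pkey b2" using pindep_fstep_pkey_neq[OF _ step(1) R(3)] syn by auto
  with R syn S step fstep_keys[OF R(2)] show ?thesis
    by (auto intro!: exI[of _ "Par R1 S"] fstep.intros)
qed

lemma pindep_forward_diamond_syn:
  assumes step: "fstep X th1 X'" "fstep Y th2 Y'" "ell th1 = Vis l" "ell th2 = Vis (bar l)"
      "pkey th1 = pkey th2"
    and IH1: "\<And>b R. fstep X b R \<Longrightarrow> pindep th1 b \<Longrightarrow> \<exists>S. fstep X' b S \<and> fstep R th1 S"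
    and IH2: "\<And>b R. fstep Y b R \<Longrightarrow> pindep th2 b \<Longrightarrow> \<exists>S. fstep Y' b S \<and> fstep R th2 S"
    and other: "fstep (Par X Y) b R" "pindep (PSyn th1 th2) b"
  shows "\<exists>S. fstep (Par X' Y') b S \<and> fstep R (PSyn th1 th2) S"
  using other(2)
proof (cases rule: pindep_PSyn_cases)
  case (left b0)
  with other(1) obtain R0 where R: "R = Par R0 Y" "fstep X b0 R0" "pkey b0 \<notin> keys Y"
    by (auto simp: fstep_from_Par)
  from IH1[OF R(2)] left obtain S where S: "fstep X' b0 S" "fstep R0 th1 S" by auto
  have "pkey th1 \<noteq> pkey b0" using pindep_fstep_pkey_neq[OF _ step(1) R(2)] left by auto
  with R left S step fstep_keys[OF step(2)] show ?thesis
    by (auto intro!: exI[of _ "Par S Y'"] fstep.intros)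
next
  case (right b0)
  with other(1) obtain R0 where R: "R = Par X R0" "fstep Y b0 R0" "pkey b0 \<notin> keys X"
    by (auto simp: fstep_from_Par)
  from IH2[OF R(2)] right obtain S where S: "fstep Y' b0 S" "fstep R0 th2 S" by auto
  have "pkey th2 \<noteq> pkey b0" using pindep_fstep_pkey_neq[OF _ step(2) R(2)] right by auto
  with R right S step fstep_keys[OF step(1)] show ?thesis
    by (auto intro!: exI[of _ "Par X' S"] fstep.intros)
next
  case (syn b1 b2)
  with other(1) obtain R1 R2 l' where R: "R = Par R1 R2" "fstep X b1 R1" "fstep Y b2 R2"
      "ell b1 = Vis l'" "ell b2 = Vis (bar l')" "pkey b1 = pkey b2"
    by (auto simp: fstep_from_Par)
  from IH1[OF R(2)] syn obtain S1 where S1: "fstep X' b1 S1" "fstep R1 th1 S1" by auto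
  from IH2[OF R(3)] syn obtain S2 where S2: "fstep Y' b2 S2" "fstep R2 th2 S2" by auto
  with R syn step S1 show ?thesis by (auto intro!: exI[of _ "Par S1 S2"] fstep.intros)
qed

lemma pindep_forward_diamond:
  "fstep P a Q \<Longrightarrow> fstep P b R \<Longrightarrow> pindep a b \<Longrightarrow> \<exists>S. fstep Q b S \<and> fstep R a S"
proof (induction arbitrary: b R rule: fstep.induct)
  case act
  then show ?case by (simp add: pindep_PBase)
next
  case (pre X th X' k c)
  from pre.prems(1) obtain R0 where R: "R = KPre c k R0" "fstep X b R0" "pkey b \<noteq> k"
    by (auto simp: fstep_from_KPre)
  from pre.IH[OF R(2)] pre.prems obtain S where "fstep X' b S" "fstep R0 th S" by blast
  with R pre.hyps show ?case by (auto intro!: exI[of _ "KPre c k S"] fstep.intros)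
next
  case (res X th X' l)
  from res.prems(1) obtain R0 where R: "R = Res R0 l" "fstep X b R0" "ell b \<noteq> Vis l"
      "ell b \<noteq> Vis (bar l)"
    by (auto simp: fstep_from_Res)
  from res.IH[OF R(2)] res.prems obtain S where "fstep X' b S" "fstep R0 th S" by blast
  with R res.hyps show ?case by (auto intro!: exI[of _ "Res S l"] fstep.intros)
next
  case (sumL X th X' Y)
  from sumL.prems(2) obtain b0 where b: "b = PPfx (DSum SL) b0" "pindep th b0"
    by (rule pindep_PSum_cases)
  with sumL.prems(1) obtain R0 where R: "R = Sum R0 Y" "fstep X b0 R0"
    by (auto simp: fstep_from_Sum)
  from sumL.IH[OF R(2) b(2)] obtain S where "fstep X' b0 S" "fstep R0 th S" by blast
  with R b sumL.hyps show ?case by (auto intro!: exI[of _ "Sum S Y"] fstep.intros)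
next
  case (sumR X th X' Y)
  from sumR.prems(2) obtain b0 where b: "b = PPfx (DSum SR) b0" "pindep th b0"
    by (rule pindep_PSum_cases)
  with sumR.prems(1) obtain R0 where R: "R = Sum Y R0" "fstep X b0 R0"
    by (auto simp: fstep_from_Sum)
  from sumR.IH[OF R(2) b(2)] obtain S where "fstep X' b0 S" "fstep R0 th S" by blast
  with R b sumR.hyps show ?case by (auto intro!: exI[of _ "Sum Y S"] fstep.intros)
next
  case parL
  show ?case by (rule pindep_forward_diamond_parL[OF parL.hyps parL.IH parL.prems])
next
  case parR
  show ?case by (rule pindep_forward_diamond_parR[OF parR.hyps parR.IH parR.prems])
next
  case syn
  show ?case by (rule pindep_forward_diamond_syn[OF syn.hyps syn.IH syn.prems])
qed

lemma pindep_commute_steps_parL: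
  assumes step: "fstep X th X'" "pkey th \<notin> keys Y"
    and IH: "\<And>b R. fstep R b X \<Longrightarrow> pindep th b \<Longrightarrow> \<exists>S. fstep S b X' \<and> fstep R th S"
    and prev: "fstep R b (Par X Y)" "pindep (PPfx (DPar SL) th) b"
  shows "\<exists>S. fstep S b (Par X' Y) \<and> fstep R (PPfx (DPar SL) th) S"
  using prev(2)
proof (cases rule: pindep_PPar_cases)
  case (same b0)
  with prev(1) obtain R0 where R: "R = Par R0 Y" "fstep R0 b0 X" "pkey b0 \<notin> keys Y"
    by (auto simp: fstep_to_Par)
  from IH[OF R(2)] same obtain S where "fstep S b0 X'" "fstep R0 th S" by blast
  with R same step show ?thesis by (auto intro!: exI[of _ "Par S Y"] fstep.intros)
next
  case (opposite b0)
  with prev(1) obtain R0 where R: "R = Par X R0" "fstep R0 b0 Y" "pkey b0 \<notin> keys X"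
    by (auto simp: fstep_to_Par)
  with opposite step fstep_keys[OF step(1)] fstep_keys[OF R(2)] show ?thesis
    by (auto intro!: exI[of _ "Par X' R0"] fstep.intros)
next
  case (syn b1 b2)
  with prev(1) obtain R1 R2 l where R: "R = Par R1 R2" "fstep R1 b1 X" "fstep R2 b2 Y"
      "ell b1 = Vis l" "ell b2 = Vis (bar l)" "pkey b1 = pkey b2"
    by (auto simp: fstep_to_Par)
  from IH[OF R(2)] syn obtain S where S: "fstep S b1 X'" "fstep R1 th S" by auto
  with R syn step fstep_keys_mono[OF R(3)] show ?thesis
    by (auto intro!: exI[of _ "Par S R2"] fstep.intros)
qed

lemma pindep_commute_steps_parR:
  assumes step: "fstep X th X'" "pkey th \<notin> keys Y"
    and IH: "\<And>b R. fstep R b X \<Longrightarrow> pindep th b \<Longrightarrow> \<exists>S. fstep S b X' \<and> fstep R th S"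
    and prev: "fstep R b (Par Y X)" "pindep (PPfx (DPar SR) th) b"
  shows "\<exists>S. fstep S b (Par Y X') \<and> fstep R (PPfx (DPar SR) th) S"
  using prev(2)
proof (cases rule: pindep_PPar_cases)
  case (same b0)
  with prev(1) obtain R0 where R: "R = Par Y R0" "fstep R0 b0 X" "pkey b0 \<notin> keys Y"
    by (auto simp: fstep_to_Par)
  from IH[OF R(2)] same obtain S where "fstep S b0 X'" "fstep R0 th S" by blast
  with R same step show ?thesis by (auto intro!: exI[of _ "Par Y S"] fstep.intros)
next
  case (opposite b0)
  with prev(1) obtain R0 where R: "R = Par R0 X" "fstep R0 b0 Y" "pkey b0 \<notin> keys X"
    by (auto simp: fstep_to_Par)
  with opposite step fstep_keys[OF step(1)] fstep_keys[OF R(2)] show ?thesis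
    by (auto intro!: exI[of _ "Par R0 X'"] fstep.intros)
next
  case (syn b1 b2)
  with prev(1) obtain R1 R2 l where R: "R = Par R1 R2" "fstep R1 b1 Y" "fstep R2 b2 X"
      "ell b1 = Vis l" "ell b2 = Vis (bar l)" "pkey b1 = pkey b2"
    by (auto simp: fstep_to_Par)
  from IH[OF R(3)] syn obtain S where S: "fstep S b2 X'" "fstep R2 th S" by auto
  with R syn step fstep_keys_mono[OF R(2)] show ?thesis
    by (auto intro!: exI[of _ "Par R1 S"] fstep.intros)
qed

lemma pindep_commute_steps_syn:
  assumes step: "fstep X th1 X'" "fstep Y th2 Y'" "ell th1 = Vis l" "ell th2 = Vis (bar l)"
      "pkey th1 = pkey th2"
    and IH1: "\<And>b R. fstep R b X \<Longrightarrow> pindep th1 b \<Longrightarrow> \<exists>S. fstep S b X' \<and> fstep R th1 S"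
    and IH2: "\<And>b R. fstep R b Y \<Longrightarrow> pindep th2 b \<Longrightarrow> \<exists>S. fstep S b Y' \<and> fstep R th2 S"
    and prev: "fstep R b (Par X Y)" "pindep (PSyn th1 th2) b"
  shows "\<exists>S. fstep S b (Par X' Y') \<and> fstep R (PSyn th1 th2) S"
  using prev(2)
proof (cases rule: pindep_PSyn_cases)
  case (left b0)
  with prev(1) obtain R0 where R: "R = Par R0 Y" "fstep R0 b0 X" "pkey b0 \<notin> keys Y"
    by (auto simp: fstep_to_Par)
  from IH1[OF R(2)] left obtain S where S: "fstep S b0 X'" "fstep R0 th1 S" by auto
  have "pkey th1 \<noteq> pkey b0" using pindep_fstep_pkey_neq[OF _ step(1) R(2)] left by auto
  with R left S step fstep_keys[OF step(2)] show ?thesis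
    by (auto intro!: exI[of _ "Par S Y'"] fstep.intros)
next
  case (right b0)
  with prev(1) obtain R0 where R: "R = Par X R0" "fstep R0 b0 Y" "pkey b0 \<notin> keys X"
    by (auto simp: fstep_to_Par)
  from IH2[OF R(2)] right obtain S where S: "fstep S b0 Y'" "fstep R0 th2 S" by auto
  have "pkey th2 \<noteq> pkey b0" using pindep_fstep_pkey_neq[OF _ step(2) R(2)] right by auto
  with R right S step fstep_keys[OF step(1)] show ?thesis
    by (auto intro!: exI[of _ "Par X' S"] fstep.intros)
next
  case (syn b1 b2)
  with prev(1) obtain R1 R2 l' where R: "R = Par R1 R2" "fstep R1 b1 X" "fstep R2 b2 Y"
      "ell b1 = Vis l'" "ell b2 = Vis (bar l')" "pkey b1 = pkey b2"
    by (auto simp: fstep_to_Par)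
  from IH1[OF R(2)] syn obtain S1 where S1: "fstep S1 b1 X'" "fstep R1 th1 S1" by auto
  from IH2[OF R(3)] syn obtain S2 where S2: "fstep S2 b2 Y'" "fstep R2 th2 S2" by auto
  with R syn step S1 show ?thesis by (auto intro!: exI[of _ "Par S1 S2"] fstep.intros)
qed

lemma pindep_commute_steps:
  "fstep P a Q \<Longrightarrow> fstep R b P \<Longrightarrow> pindep a b \<Longrightarrow> \<exists>S. fstep S b Q \<and> fstep R a S"
proof (induction arbitrary: b R rule: fstep.induct)
  case act
  then show ?case by (simp add: pindep_PBase)
next
  case (pre X th X' k c)
  from pre.prems obtain R0 where R: "R = KPre c k R0" "fstep R0 b X" "pkey b \<noteq> k"
    by (auto simp: fstep_to_KPre pindep_PBase)
  from pre.IH[OF R(2)] pre.prems obtain S where "fstep S b X'" "fstep R0 th S" by blast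
  with R pre.hyps show ?case by (auto intro!: exI[of _ "KPre c k S"] fstep.intros)
next
  case (res X th X' l)
  from res.prems(1) obtain R0 where R: "R = Res R0 l" "fstep R0 b X" "ell b \<noteq> Vis l"
      "ell b \<noteq> Vis (bar l)"
    by (auto simp: fstep_to_Res)
  from res.IH[OF R(2)] res.prems obtain S where "fstep S b X'" "fstep R0 th S" by blast
  with R res.hyps show ?case by (auto intro!: exI[of _ "Res S l"] fstep.intros)
next
  case (sumL X th X' Y)
  from sumL.prems(2) obtain b0 where b: "b = PPfx (DSum SL) b0" "pindep th b0"
    by (rule pindep_PSum_cases)
  with sumL.prems(1) obtain R0 where R: "R = Sum R0 Y" "fstep R0 b0 X"
    by (auto simp: fstep_to_Sum)
  from sumL.IH[OF R(2) b(2)] obtain S where "fstep S b0 X'" "fstep R0 th S" by blast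
  with R b sumL.hyps show ?case by (auto intro!: exI[of _ "Sum S Y"] fstep.intros)
next
  case (sumR X th X' Y)
  from sumR.prems(2) obtain b0 where b: "b = PPfx (DSum SR) b0" "pindep th b0"
    by (rule pindep_PSum_cases)
  with sumR.prems(1) obtain R0 where R: "R = Sum Y R0" "fstep R0 b0 X"
    by (auto simp: fstep_to_Sum)
  from sumR.IH[OF R(2) b(2)] obtain S where "fstep S b0 X'" "fstep R0 th S" by blast
  with R b sumR.hyps show ?case by (auto intro!: exI[of _ "Sum Y S"] fstep.intros)
next
  case parL
  show ?case by (rule pindep_commute_steps_parL[OF parL.hyps parL.IH parL.prems])
next
  case parR
  show ?case by (rule pindep_commute_steps_parR[OF parR.hyps parR.IH parR.prems])
next
  case syn
  show ?case by (rule pindep_commute_steps_syn[OF syn.hyps syn.IH syn.prems])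
qed


section \<open>CCSK transitions\<close>

lemma reachable_any_step: "reachable X \<Longrightarrow> any_step X Y \<Longrightarrow> reachable Y"
  unfolding reachable_def by (blast intro: rtrancl_into_rtrancl)

lemma reachable_fstep_tgt: "reachable X \<Longrightarrow> fstep X a Y \<Longrightarrow> reachable Y"
  using reachable_any_step unfolding any_step_def by blast

lemma reachable_fstep_src: "reachable Y \<Longrightarrow> fstep X a Y \<Longrightarrow> reachable X"
  using reachable_any_step unfolding any_step_def by blast

definition fw_trans :: "'n proc \<Rightarrow> 'n plab \<Rightarrow> 'n proc \<Rightarrow> 'n trans" where
  "fw_trans P a Q = Tr P Fw (ell a) (pkey a) Q"

definition bw_trans :: "'n proc \<Rightarrow> 'n plab \<Rightarrow> 'n proc \<Rightarrow> 'n trans" where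
  "bw_trans Q a P = Tr Q Bw (ell a) (pkey a) P"

lemma fw_trans_sel [simp]:
  "src (fw_trans P a Q) = P" "tgt (fw_trans P a Q) = Q" "tdir (fw_trans P a Q) = Fw"
  "lbl (fw_trans P a Q) = ell a" "tkey (fw_trans P a Q) = pkey a"
  by (simp_all add: fw_trans_def)

lemma bw_trans_sel [simp]:
  "src (bw_trans Q a P) = Q" "tgt (bw_trans Q a P) = P" "tdir (bw_trans Q a P) = Bw"
  "lbl (bw_trans Q a P) = ell a" "tkey (bw_trans Q a P) = pkey a"
  by (simp_all add: bw_trans_def)

lemma hat_lab_Fw: "hat_lab t a \<Longrightarrow> tdir t = Fw \<Longrightarrow> fstep (src t) a (tgt t)"
  unfolding hat_lab_def by simp

lemma hat_lab_Bw: "hat_lab t a \<Longrightarrow> tdir t = Bw \<Longrightarrow> fstep (tgt t) a (src t)"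
  unfolding hat_lab_def by simp

lemma hat_lab_pkey: "hat_lab t a \<Longrightarrow> pkey a = tkey t"
  unfolding hat_lab_def by simp

lemma hat_lab_ell: "hat_lab t a \<Longrightarrow> ell a = lbl t"
  unfolding hat_lab_def by simp

lemma hat_lab_fw_trans: "fstep P a Q \<Longrightarrow> hat_lab (fw_trans P a Q) a"
  unfolding hat_lab_def by simp

lemma hat_lab_bw_trans: "fstep P a Q \<Longrightarrow> hat_lab (bw_trans Q a P) a"
  unfolding hat_lab_def by simp

lemma is_trans_fw_trans: "reachable P \<Longrightarrow> fstep P a Q \<Longrightarrow> is_trans (fw_trans P a Q)"
  unfolding is_trans_def using hat_lab_fw_trans by auto

lemma is_trans_bw_trans: "reachable Q \<Longrightarrow> fstep P a Q \<Longrightarrow> is_trans (bw_trans Q a P)"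
  unfolding is_trans_def using hat_lab_bw_trans by auto

lemma fw_trans_hat_lab: "hat_lab t a \<Longrightarrow> tdir t = Fw \<Longrightarrow> t = fw_trans (src t) a (tgt t)"
  unfolding hat_lab_def fw_trans_def by (cases t) simp

lemma is_trans_reachable_tgt: "is_trans t \<Longrightarrow> reachable (tgt t)"
  unfolding is_trans_def hat_lab_def
  by (auto split: if_splits intro: reachable_fstep_tgt reachable_fstep_src)

lemma is_trans_path_rel: "is_trans t \<Longrightarrow> (src t, tgt t) \<in> path_rel"
  unfolding path_rel_def by auto

lemma tindep_tkey_neq: "tindep t u \<Longrightarrow> tkey t \<noteq> tkey u"
  unfolding tindep_def hat_lab_def by (auto split: if_splits dest: pindep_fstep_pkey_neq)

definition inv_trans :: "'n trans \<Rightarrow> 'n trans" where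
  "inv_trans t = Tr (tgt t) (if tdir t = Fw then Bw else Fw) (lbl t) (tkey t) (src t)"

lemma inv_trans_sel [simp]:
  "src (inv_trans t) = tgt t" "tgt (inv_trans t) = src t" "lbl (inv_trans t) = lbl t"
  "tkey (inv_trans t) = tkey t" "tdir (inv_trans t) = (if tdir t = Fw then Bw else Fw)"
  by (simp_all add: inv_trans_def)

lemma inv_trans_inv_trans [simp]: "inv_trans (inv_trans t) = t"
  by (cases t; cases "tdir t") (simp_all add: inv_trans_def)

lemma hat_lab_inv_trans [simp]: "hat_lab (inv_trans t) a \<longleftrightarrow> hat_lab t a"
  unfolding hat_lab_def by (cases "tdir t") auto

lemma is_trans_inv_trans: "is_trans t \<Longrightarrow> is_trans (inv_trans t)"
  using is_trans_reachable_tgt[of t] unfolding is_trans_def by auto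

lemma fwd_inv_trans [simp]: "fwd (inv_trans t) = fwd t"
  by (cases t; cases "tdir t") (simp_all add: fwd_def inv_trans_def)

lemma sym_path_rel: "sym path_rel"
proof (rule symI)
  fix X Y assume "(X, Y) \<in> path_rel"
  then obtain t where "is_trans t" "src t = X" "tgt t = Y" unfolding path_rel_def by auto
  then show "(Y, X) \<in> path_rel"
    unfolding path_rel_def by (auto intro!: exI[of _ "inv_trans t"] is_trans_inv_trans)
qed

lemma sym_path_rel_avoid: "sym (path_rel_avoid k)"
proof (rule symI)
  fix X Y assume "(X, Y) \<in> path_rel_avoid k"
  then obtain t where "is_trans t" "src t = X" "tgt t = Y" "tkey t \<noteq> k"
    unfolding path_rel_avoid_def by auto
  then show "(Y, X) \<in> path_rel_avoid k"
    unfolding path_rel_avoid_def by (auto intro!: exI[of _ "inv_trans t"] is_trans_inv_trans)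
qed

lemma key_equiv_refl: "key_equiv t t"
  unfolding key_equiv_def by simp

lemma key_equiv_sym: "key_equiv t1 t2 \<Longrightarrow> key_equiv t2 t1"
  unfolding key_equiv_def by (auto intro: symD[OF sym_rtrancl[OF sym_path_rel_avoid]])

lemma key_equiv_trans: "key_equiv t1 t2 \<Longrightarrow> key_equiv t2 t3 \<Longrightarrow> key_equiv t1 t3"
  unfolding key_equiv_def by auto

lemma key_equiv_inv_trans [simp]: "key_equiv t1 (inv_trans t2) \<longleftrightarrow> key_equiv t1 t2"
  "key_equiv (inv_trans t1) t2 \<longleftrightarrow> key_equiv t1 t2"
  unfolding key_equiv_def by simp_all


section \<open>Squares of transitions\<close>

definition trans_square :: "'n trans \<Rightarrow> 'n trans \<Rightarrow> 'n trans \<Rightarrow> 'n trans \<Rightarrow> bool" where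
  "trans_square t u u' t' \<longleftrightarrow> is_trans t \<and> is_trans u \<and> is_trans u' \<and> is_trans t' \<and>
     src u = src t \<and> src u' = tgt t \<and> src t' = tgt u \<and> tgt u' = tgt t' \<and>
     lbl u' = lbl u \<and> tkey u' = tkey u \<and> tdir u' = tdir u \<and>
     lbl t' = lbl t \<and> tkey t' = tkey t \<and> tdir t' = tdir t"

lemma square_iff: "square t t' \<longleftrightarrow> (\<exists>u u'. trans_square t u u' t' \<and> tindep t u)"
  unfolding square_def trans_square_def by blast

lemma direct_key_indep_iff:
  "direct_key_indep t u \<longleftrightarrow> tkey t \<noteq> tkey u \<and> (\<exists>u' t'. trans_square t u u' t')"
  unfolding direct_key_indep_def trans_square_def by (auto 0 3)

lemma trans_square_swap: "trans_square t u u' t' \<Longrightarrow> trans_square u t t' u'"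
  unfolding trans_square_def by auto

lemma trans_square_inv_trans:
  "trans_square t u u' t' \<Longrightarrow> trans_square (inv_trans t) u' u (inv_trans t')"
  unfolding trans_square_def by (auto intro: is_trans_inv_trans)

lemma forward_diamond_labels:
  assumes "fstep W a Z" "fstep W b P" "fstep P a' X" "fstep Z b' X"
    and "pkey a' = pkey a" "pkey b' = pkey b" "pkey a \<noteq> pkey b"
  shows "a' = a \<and> b' = b \<and> pindep a b"
proof -
  obtain W' where W': "fstep W' b' P" "fstep W' a' Z"
    using fstep_backward_diamond[OF assms(3,4)] assms(5-7) by auto
  have "W' = W \<and> b' = b" using fstep_unique_undo[OF W'(1) assms(2)] assms(6) .
  moreover have "a' = a" using fstep_unique_undo[OF W'(2) assms(1)] assms(5) by simp
  ultimately show ?thesis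
    using diamond_pindep[OF assms(1,2)] assms(3,4,7) by simp
qed

lemma trans_square_labels:
  assumes sq: "trans_square t u u' t'" and keys: "tkey t \<noteq> tkey u"
    and lab: "hat_lab t a" "hat_lab u b" "hat_lab u' b'" "hat_lab t' a'"
  shows "a' = a \<and> b' = b \<and> pindep a b"
proof -
  have key_eqs: "pkey a' = pkey a" "pkey b' = pkey b" "pkey a \<noteq> pkey b"
    using sq keys lab by (auto simp: trans_square_def dest!: hat_lab_pkey)
  note Fw_steps = lab[THEN hat_lab_Fw] and Bw_steps = lab[THEN hat_lab_Bw]
  show ?thesis
  proof (cases "tdir t"; cases "tdir u")
    assume "tdir t = Fw" "tdir u = Fw"
    with sq Fw_steps have "fstep (src t) a (tgt t)" "fstep (src t) b (tgt u)"
      "fstep (tgt u) a' (tgt t')" "fstep (tgt t) b' (tgt t')" by (auto simp: trans_square_def)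
    from forward_diamond_labels[OF this key_eqs] show ?thesis .
  next
    assume "tdir t = Fw" "tdir u = Bw"
    with sq Fw_steps Bw_steps have "fstep (tgt u) a' (tgt t')" "fstep (tgt u) b (src t)"
      "fstep (src t) a (tgt t)" "fstep (tgt t') b' (tgt t)" by (auto simp: trans_square_def)
    from forward_diamond_labels[OF this] key_eqs show ?thesis by auto
  next
    assume "tdir t = Bw" "tdir u = Fw"
    with sq Fw_steps Bw_steps have "fstep (tgt t) a (src t)" "fstep (tgt t) b' (tgt t')"
      "fstep (tgt t') a' (tgt u)" "fstep (src t) b (tgt u)" by (auto simp: trans_square_def)
    from forward_diamond_labels[OF this] key_eqs show ?thesis by auto
  next
    assume "tdir t = Bw" "tdir u = Bw"
    with sq Bw_steps have "fstep (tgt t') a' (tgt u)" "fstep (tgt t') b' (tgt t)"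
      "fstep (tgt t) a (src t)" "fstep (tgt u) b (src t)" by (auto simp: trans_square_def)
    from forward_diamond_labels[OF this] key_eqs show ?thesis by (auto intro: pindep_sym)
  qed
qed

lemma trans_square_tindep:
  assumes sq: "trans_square t u u' t'" and keys: "tkey t \<noteq> tkey u"
  shows "tindep t u"
proof -
  from sq obtain a b b' a' where lab: "hat_lab t a" "hat_lab u b" "hat_lab u' b'" "hat_lab t' a'"
    unfolding trans_square_def is_trans_def by blast
  from sq is_trans_path_rel[of u] have "connected t u"
    unfolding connected_def trans_square_def by auto
  with sq lab trans_square_labels[OF sq keys lab] show ?thesis
    unfolding tindep_def trans_square_def by blast
qed

lemma direct_key_indep_tindep: "direct_key_indep t u \<Longrightarrow> tindep t u"
  unfolding direct_key_indep_iff using trans_square_tindep by blast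

lemma direct_key_indep_sym: "direct_key_indep t u \<Longrightarrow> direct_key_indep u t"
  unfolding direct_key_indep_iff by (auto dest: trans_square_swap)

lemma square_inv_trans:
  assumes "square t t'"
  shows "square (inv_trans t) (inv_trans t')"
proof -
  from assms obtain u u' where sq: "trans_square t u u' t'" and ind: "tindep t u"
    unfolding square_iff by blast
  have keys: "tkey (inv_trans t) \<noteq> tkey u'"
    using sq tindep_tkey_neq[OF ind] by (simp add: trans_square_def)
  from trans_square_inv_trans[OF sq] trans_square_tindep[OF trans_square_inv_trans[OF sq] keys]
  show ?thesis unfolding square_iff by blast
qed

lemma ev_equiv_inv_trans: "ev_equiv t t' \<Longrightarrow> ev_equiv (inv_trans t) (inv_trans t')"
  by (induction rule: ev_equiv.induct) (auto intro: ev_equiv.intros square_inv_trans)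


section \<open>Event equivalence and key equivalence\<close>

lemma square_key_equiv:
  assumes "square t t'"
  shows "key_equiv t t'"
proof -
  from assms obtain u u' where sq: "trans_square t u u' t'" and ind: "tindep t u"
    unfolding square_iff by blast
  have keys: "tkey u \<noteq> tkey t" "tkey u' \<noteq> tkey t"
    using sq tindep_tkey_neq[OF ind] by (auto simp: trans_square_def)
  show ?thesis
  proof (cases "tdir t")
    case Fw
    with sq keys(2) have "(tgt t, tgt t') \<in> path_rel_avoid (tkey t)"
      unfolding path_rel_avoid_def trans_square_def by auto
    with Fw sq show ?thesis unfolding key_equiv_def fwd_def trans_square_def by auto
  next
    case Bw
    with sq keys(1) have "(src t, src t') \<in> path_rel_avoid (tkey t)"
      unfolding path_rel_avoid_def trans_square_def by auto
    with Bw sq show ?thesis unfolding key_equiv_def fwd_def trans_square_def by auto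
  qed
qed

lemma ev_equiv_key_equiv: "ev_equiv t t' \<Longrightarrow> key_equiv t t'"
  by (induction rule: ev_equiv.induct)
    (auto intro: square_key_equiv key_equiv_refl key_equiv_sym key_equiv_trans)

lemma ev_equiv_tdir: "ev_equiv t t' \<Longrightarrow> tdir t' = tdir t"
  by (induction rule: ev_equiv.induct) (auto simp: square_def)

lemma ev_equiv_src_path: "ev_equiv t t' \<Longrightarrow> (src t, src t') \<in> path_rel\<^sup>*"
proof (induction rule: ev_equiv.induct)
  case (base t t')
  then obtain u where "is_trans u" "src u = src t" "tgt u = src t'"
    unfolding square_def by auto
  then show ?case using is_trans_path_rel[of u] by auto
next
  case (sym t t')
  then show ?case using sym_rtrancl[OF sym_path_rel] by (auto dest: symD)
qed auto

lemma diamond_square: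
  assumes "reachable W" "fstep W a Z" "fstep W b P" "fstep P a X" "fstep Z b X"
    and "pkey a \<noteq> pkey b"
  shows "square (fw_trans P a X) (fw_trans W a Z)"
proof -
  have reach: "reachable P" "reachable X" "reachable Z"
    using assms(1-4) by (auto intro: reachable_fstep_tgt)
  have sq: "trans_square (fw_trans P a X) (bw_trans P b W) (bw_trans X b Z) (fw_trans W a Z)"
    unfolding trans_square_def using assms reach
    by (auto intro: is_trans_fw_trans is_trans_bw_trans)
  with trans_square_tindep[OF sq] assms(6) show ?thesis
    unfolding square_iff by auto
qed

definition undo_avoiding :: "key \<Rightarrow> 'n proc \<Rightarrow> 'n proc \<Rightarrow> bool" where
  "undo_avoiding k Y X \<longleftrightarrow> (\<exists>b. fstep X b Y \<and> pkey b \<noteq> k)"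

lemma strong_confluentp_undo_avoiding: "strong_confluentp (undo_avoiding k)"
proof
  fix X Y Z assume "undo_avoiding k X Y" "undo_avoiding k X Z"
  then obtain b c where steps: "fstep Y b X" "pkey b \<noteq> k" "fstep Z c X" "pkey c \<noteq> k"
    unfolding undo_avoiding_def by blast
  show "\<exists>U. (undo_avoiding k)\<^sup>*\<^sup>* Y U \<and> (undo_avoiding k)\<^sup>=\<^sup>= Z U"
  proof (cases "pkey b = pkey c")
    case True
    with fstep_unique_undo[OF steps(1,3)] show ?thesis by auto
  next
    case False
    with fstep_backward_diamond[OF steps(1,3)] steps obtain W where "fstep W c Y" "fstep W b Z"
      by blast
    with steps show ?thesis unfolding undo_avoiding_def by blast
  qed
qed

lemma path_rel_avoid_equivclp:
  "(X, Y) \<in> (path_rel_avoid k)\<^sup>* \<Longrightarrow> equivclp (undo_avoiding k) X Y"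
proof (induction rule: rtrancl_induct)
  case (step Y Z)
  from step.hyps(2) obtain t where "is_trans t" "src t = Y" "tgt t = Z" "tkey t \<noteq> k"
    unfolding path_rel_avoid_def by blast
  moreover from \<open>is_trans t\<close> obtain a where "hat_lab t a"
    unfolding is_trans_def by blast
  ultimately have "undo_avoiding k Y Z \<or> undo_avoiding k Z Y"
    unfolding undo_avoiding_def hat_lab_def by (auto split: if_splits)
  with step.IH show ?case by (rule equivclp_into_equivclp)
qed simp

lemma undo_avoiding_ev_equiv:
  assumes "(undo_avoiding k)\<^sup>*\<^sup>* Q M" "fstep P a Q" "pkey a = k" "reachable Q"
  shows "\<exists>PM. fstep PM a M \<and> reachable M \<and> ev_equiv (fw_trans P a Q) (fw_trans PM a M)"
  using assms(1)
proof (induction rule: rtranclp_induct)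
  case base
  with assms show ?case by (auto intro: ev_equiv.refl)
next
  case (step M0 M)
  then obtain PM0 where IH: "fstep PM0 a M0" "reachable M0"
      "ev_equiv (fw_trans P a Q) (fw_trans PM0 a M0)"
    by blast
  from step.hyps(2) obtain b where b: "fstep M b M0" "pkey b \<noteq> k"
    unfolding undo_avoiding_def by blast
  with fstep_backward_diamond[OF IH(1) b(1)] assms(3)
  obtain W where W: "fstep W b PM0" "fstep W a M" by auto
  have "reachable W" using IH(1,2) W(1) by (blast intro: reachable_fstep_src)
  with W IH b assms(3) have "square (fw_trans PM0 a M0) (fw_trans W a M)"
    by (auto intro: diamond_square)
  with IH W \<open>reachable W\<close> show ?case
    by (blast intro: ev_equiv.trans ev_equiv.base reachable_fstep_tgt)
qed

lemma key_equiv_ev_equiv_Fw: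
  assumes "is_trans t1" "is_trans t2" "tdir t1 = Fw" "tdir t2 = Fw" "key_equiv t1 t2"
  shows "ev_equiv t1 t2"
proof -
  obtain a1 a2 where lab: "hat_lab t1 a1" "hat_lab t2 a2"
    using assms(1,2) unfolding is_trans_def by blast
  define k where "k = tkey t1"
  have keys: "pkey a1 = k" "pkey a2 = k"
    using lab assms(3-5) by (auto simp: k_def key_equiv_def fwd_def dest!: hat_lab_pkey)
  have "equivclp (undo_avoiding k) (tgt t1) (tgt t2)"
    using assms(3-5) unfolding key_equiv_def fwd_def k_def by (auto intro: path_rel_avoid_equivclp)
  then obtain M where M: "(undo_avoiding k)\<^sup>*\<^sup>* (tgt t1) M" "(undo_avoiding k)\<^sup>*\<^sup>* (tgt t2) M"
    unfolding semiconfluentp_equivclp[OF strong_confluentp_into_semiconfluentp,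
        OF strong_confluentp_undo_avoiding] rtranclp_conversep by auto
  obtain PM1 PM2 where
    "fstep PM1 a1 M" "ev_equiv (fw_trans (src t1) a1 (tgt t1)) (fw_trans PM1 a1 M)"
    "fstep PM2 a2 M" "ev_equiv (fw_trans (src t2) a2 (tgt t2)) (fw_trans PM2 a2 M)"
    using undo_avoiding_ev_equiv[OF M(1) hat_lab_Fw[OF lab(1) assms(3)] keys(1)]
      undo_avoiding_ev_equiv[OF M(2) hat_lab_Fw[OF lab(2) assms(4)] keys(2)]
      assms(1,2) is_trans_reachable_tgt by blast
  moreover have "PM1 = PM2 \<and> a1 = a2"
    using fstep_unique_undo[OF \<open>fstep PM1 a1 M\<close> \<open>fstep PM2 a2 M\<close>] keys by simp
  ultimately show ?thesis
    using fw_trans_hat_lab[OF lab(1) assms(3)] fw_trans_hat_lab[OF lab(2) assms(4)]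
    by (metis ev_equiv.sym ev_equiv.trans)
qed

lemma key_equiv_ev_equiv:
  assumes "is_trans t1" "is_trans t2" "tdir t1 = tdir t2" "key_equiv t1 t2"
  shows "ev_equiv t1 t2"
proof (cases "tdir t1")
  case Fw
  with assms show ?thesis by (auto intro: key_equiv_ev_equiv_Fw)
next
  case Bw
  with assms have "ev_equiv (inv_trans t1) (inv_trans t2)"
    by (auto intro: key_equiv_ev_equiv_Fw is_trans_inv_trans)
  then show ?thesis using ev_equiv_inv_trans by fastforce
qed


section \<open>Key independence and core independence\<close>

lemma tindep_sym_coinitial: "tindep t u \<Longrightarrow> src t = src u \<Longrightarrow> tindep u t"
  unfolding tindep_def connected_def using is_trans_path_rel[of t] by (auto intro: pindep_sym)

lemma coinitial_tindep_square_Fw: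
  assumes ind: "tindep t u" and coinitial: "src t = src u" and dir: "tdir t = Fw"
  shows "\<exists>u' t'. trans_square t u u' t'"
proof -
  obtain a b where lab: "hat_lab t a" "hat_lab u b" and "pindep a b"
    and T: "is_trans t" "is_trans u"
    using ind unfolding tindep_def by blast
  have reach: "reachable (tgt t)" "reachable (tgt u)"
    using T is_trans_reachable_tgt by auto
  note labels = hat_lab_ell[OF lab(1)] hat_lab_ell[OF lab(2)]
    hat_lab_pkey[OF lab(1)] hat_lab_pkey[OF lab(2)]
  have step_t: "fstep (src t) a (tgt t)" using hat_lab_Fw[OF lab(1) dir] .
  show ?thesis
  proof (cases "tdir u")
    case Fw
    with lab coinitial have "fstep (src t) b (tgt u)" by (auto dest: hat_lab_Fw)
    from pindep_forward_diamond[OF step_t this \<open>pindep a b\<close>] obtain S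
      where "fstep (tgt t) b S" "fstep (tgt u) a S" by blast
    with dir Fw T reach labels coinitial
    have "trans_square t u (fw_trans (tgt t) b S) (fw_trans (tgt u) a S)"
      unfolding trans_square_def by (auto intro: is_trans_fw_trans)
    then show ?thesis by blast
  next
    case Bw
    with lab coinitial have "fstep (tgt u) b (src t)" by (auto dest: hat_lab_Bw)
    from pindep_commute_steps[OF step_t this \<open>pindep a b\<close>] obtain S
      where "fstep S b (tgt t)" "fstep (tgt u) a S" by blast
    with dir Bw T reach labels coinitial
    have "trans_square t u (bw_trans (tgt t) b S) (fw_trans (tgt u) a S)"
      unfolding trans_square_def by (auto intro: is_trans_fw_trans is_trans_bw_trans)
    then show ?thesis by blast
  qed
qed

lemma coinitial_tindep_square_Bw:
  assumes ind: "tindep t u" and coinitial: "src t = src u"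
    and dirs: "tdir t = Bw" "tdir u = Bw"
  shows "\<exists>u' t'. trans_square t u u' t'"
proof -
  obtain a b where lab: "hat_lab t a" "hat_lab u b" and T: "is_trans t" "is_trans u"
    using ind unfolding tindep_def by blast
  have reach: "reachable (tgt t)" "reachable (tgt u)"
    using T is_trans_reachable_tgt by auto
  note labels = hat_lab_ell[OF lab(1)] hat_lab_ell[OF lab(2)]
    hat_lab_pkey[OF lab(1)] hat_lab_pkey[OF lab(2)]
  from lab dirs coinitial have "fstep (tgt t) a (src t)" "fstep (tgt u) b (src t)"
    by (auto dest: hat_lab_Bw)
  from fstep_backward_diamond[OF this] tindep_tkey_neq[OF ind] labels obtain W
    where "fstep W b (tgt t)" "fstep W a (tgt u)" by auto
  with dirs T reach labels coinitial
  have "trans_square t u (bw_trans (tgt t) b W) (bw_trans (tgt u) a W)"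
    unfolding trans_square_def by (auto intro: is_trans_bw_trans)
  then show ?thesis by blast
qed

lemma coinitial_tindep_direct_key_indep:
  assumes ind: "tindep t u" and coinitial: "src t = src u"
  shows "direct_key_indep t u"
proof -
  consider "tdir t = Fw" | "tdir u = Fw" | "tdir t = Bw" "tdir u = Bw"
    by (cases "tdir t"; cases "tdir u") auto
  then have "\<exists>u' t'. trans_square t u u' t'"
  proof cases
    case 1
    then show ?thesis by (rule coinitial_tindep_square_Fw[OF ind coinitial])
  next
    case 2
    from coinitial_tindep_square_Fw[OF tindep_sym_coinitial[OF ind coinitial] coinitial[symmetric] 2]
    obtain u' t' where "trans_square u t u' t'" by blast
    then show ?thesis by (blast dest: trans_square_swap)
  next
    case 3
    then show ?thesis by (rule coinitial_tindep_square_Bw[OF ind coinitial])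
  qed
  with tindep_tkey_neq[OF ind] show ?thesis unfolding direct_key_indep_iff by blast
qed

lemma direct_key_indep_inv_trans:
  assumes "direct_key_indep t u"
  obtains u' where "direct_key_indep (inv_trans t) u'" "ev_equiv u u'"
proof -
  from assms obtain u' t' where sq: "trans_square t u u' t'" and keys: "tkey t \<noteq> tkey u"
    unfolding direct_key_indep_iff by blast
  from sq keys have "tkey (inv_trans t) \<noteq> tkey u'" by (simp add: trans_square_def)
  with trans_square_inv_trans[OF sq] have "direct_key_indep (inv_trans t) u'"
    unfolding direct_key_indep_iff by blast
  moreover have "square u u'"
    using trans_square_swap[OF sq] trans_square_tindep[OF trans_square_swap[OF sq]] keys
    unfolding square_iff by auto
  ultimately show ?thesis using that ev_equiv.base by blast
qed

lemma direct_key_indep_align_left: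
  assumes "direct_key_indep t u"
  obtains t' u' where "direct_key_indep t' u'" "key_equiv t t'" "key_equiv u u'"
    "tdir t' = d" "tdir u' = tdir u"
proof (cases "tdir t = d")
  case True
  with assms that show ?thesis using key_equiv_refl by blast
next
  case False
  obtain u' where "direct_key_indep (inv_trans t) u'" "ev_equiv u u'"
    using direct_key_indep_inv_trans[OF assms] .
  moreover from False have "tdir (inv_trans t) = d" by (cases d; cases "tdir t") auto
  ultimately show ?thesis
    using that key_equiv_refl ev_equiv_key_equiv ev_equiv_tdir by fastforce
qed

lemma direct_key_indep_align:
  assumes "direct_key_indep t u"
  obtains t' u' where "direct_key_indep t' u'" "key_equiv t t'" "key_equiv u u'"
    "tdir t' = d" "tdir u' = e"
proof -
  obtain t1 u1 where 1: "direct_key_indep t1 u1" "key_equiv t t1" "key_equiv u u1"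
      "tdir t1 = d" "tdir u1 = tdir u"
    by (rule direct_key_indep_align_left[OF assms])
  obtain u2 t2 where 2: "direct_key_indep u2 t2" "key_equiv u1 u2" "key_equiv t1 t2"
      "tdir u2 = e" "tdir t2 = tdir t1"
    by (rule direct_key_indep_align_left[OF direct_key_indep_sym[OF 1(1)]])
  show ?thesis
  proof (rule that[OF direct_key_indep_sym[OF 2(1)]])
    show "key_equiv t t2" "key_equiv u u2"
      using 1 2 by (auto intro: key_equiv_trans)
  qed (use 1 2 in simp_all)
qed

theorem proposition6p12:
  fixes t u :: "'n trans"
  assumes "is_trans t" and "is_trans u"
  shows "key_indep t u \<longleftrightarrow> core_indep t u"
proof
  assume "key_indep t u"
  then obtain t1 u1 where "key_equiv t t1" "key_equiv u u1" "direct_key_indep t1 u1"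
    unfolding key_indep_def by blast
  moreover obtain t2 u2 where dki: "direct_key_indep t2 u2" and
    "key_equiv t1 t2" "key_equiv u1 u2" "tdir t2 = tdir t" "tdir u2 = tdir u"
    by (rule direct_key_indep_align[OF \<open>direct_key_indep t1 u1\<close>])
  moreover have "is_trans t2" "is_trans u2" "src t2 = src u2"
    using dki unfolding direct_key_indep_def by auto
  ultimately have "ev_equiv t t2" "ev_equiv u u2"
    using assms by (auto intro: key_equiv_ev_equiv key_equiv_trans)
  with dki \<open>src t2 = src u2\<close> show "core_indep t u"
    unfolding core_indep_def using direct_key_indep_tindep by blast
next
  assume "core_indep t u"
  then obtain t1 u1 where coinitial: "src t1 = src u1" and ev: "ev_equiv t t1" "ev_equiv u u1"
      and ind: "tindep t1 u1"
    unfolding core_indep_def by blast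
  from ind coinitial have "direct_key_indep t1 u1" by (rule coinitial_tindep_direct_key_indep)
  moreover have "connected t u"
    using ev_equiv_src_path[OF ev(1)] ev_equiv_src_path[OF ev_equiv.sym[OF ev(2)]]
      is_trans_path_rel[OF assms(2)] coinitial
    unfolding connected_def by (metis rtrancl_trans r_into_rtrancl)
  ultimately show "key_indep t u"
    using ev unfolding key_indep_def direct_key_indep_def by (blast intro: ev_equiv_key_equiv)
qed

end
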